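(* Let $\varepsilon\ge0$ and $m,M\in(0,1)$ with $m\le M$. Define $L_1,L_2\colon[0,1]\to\mathbb{R}^+$ by \[ L_1(p)=\big(e^{\varepsilon}-(e^{\varepsilon}-1)(pM+(1-p)m)\big)\exp\Big(p\tfrac{M}{m}+(1-p)\tfrac{1-m}{1-(pM+(1-p)m)}-1\Big), \] \[ L_2(p)=\Big(e^{\varepsilon}-(e^{\varepsilon}-1)\Big(pM+(1-p)\tfrac{(M+m)-pM}{2-p}\Big)\Big)\exp\Big(p\tfrac{M}{m}+(1-p)\tfrac{1-\frac{(M+m)-pM}{2-p}}{1-M}-1\Big), \] and $l_1=\ln\circ L_1$, $l_2=\ln\circ L_2$. Then: (i) If $\varepsilon\ne0$ and $m\ne M$, $L_1$ and $l_1$ attain their maximum over $[0,1]$ at $p_1=\min\{1,\max\{V_1,0\}\}$, where \[ V_1=\begin{cases}-\frac{1}{3a_1}\Big(b_1+\sqrt[3]{\tfrac{D_{1,1}+\sqrt{D_{1,1}^2-4D_{1,0}^3}}{2}}+\sqrt[3]{\tfrac{D_{1,1}-\sqrt{D_{1,1}^2-4D_{1,0}^3}}{2}}\Big)&\text{if }D_{1,1}^2-4D_{1,0}^3>0,\\[2mm] -\frac{1}{3a_1}\Big(b_1+2\sqrt{D_{1,0}}\cos\big(\tfrac13\arccos\big(\tfrac{D_{1,1}}{2R_1}\big)\big)\Big)&\text{if }D_{1,1}^2-4D_{1,0}^3\le0,\end{cases} \] with $a_1=(e^{\varepsilon}-1)\frac{M}{m}(M-m)^2$, $b_1=-\frac{M-m}{m}\big((m^2-4Mm+2M)(e^{\varepsilon}-1)+e^{\varepsilon}M\big)$,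 $c_1=\frac{1-m}{m}\big((e^{\varepsilon}-1)(2m^2-4Mm-m)+(3e^{\varepsilon}-1)M\big)$, $d_1=-(1-m)\big((e^{\varepsilon}-1)(m-2)+\frac{e^{\varepsilon}}{m}\big)$, $D_{1,0}=b_1^2-3a_1c_1$, $D_{1,1}=2b_1^3-9a_1b_1c_1+27a_1^2d_1$, $R_1=\sqrt{D_{1,0}^3}$; and $L_2$ and $l_2$ attain their maximum over $[0,1]$ at $p_2=\min\{1,\max\{V_2,0\}\}$, where \[ V_2=-\frac{1}{3a_2}\Big(b_2+2\sqrt{D_{2,0}}\cos\Big(\tfrac13\arccos\Big(\tfrac{D_{2,1}}{2R_2}\Big)\Big)\Big) \] with $a_2=\frac{e^{\varepsilon}-(e^{\varepsilon}-1)m}{m}$, $b_2=-\frac{6e^{\varepsilon}-(e^{\varepsilon}-1)(M+5m)}{m}$, $c_2=\frac{1}{(1-M)m}\big(m((e^{\varepsilon}-1)(m+9M-9)-e^{\varepsilon})+4M((e^{\varepsilon}-1)M-4e^{\varepsilon}+1)+12e^{\varepsilon}\big)$, $d_2=-(2e^{\varepsilon}-(e^{\varepsilon}-1)(M+m))\frac{4-4M-m}{(1-M)m}+2(e^{\varepsilon}-1)$, $D_{2,0}=b_2^2-3a_2c_2$, $D_{2,1}=2b_2^3-9a_2b_2c_2+27a_2^2d_2$, $R_2=\sqrt{D_{2,0}^3}$. (ii) If $\varepsilon=0$ and $m\ne M$, $L_1$ and $l_1$ attain their maximum over $[0,1]$ at $p_1=\min\{1,\max\{V_1,0\}\}$ with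 $V_1=\frac{1-m}{M-m}-\frac{\sqrt{Mm(1-m)(1-M)}}{M(M-m)}$, and $L_2$ and $l_2$ attain their maximum over $[0,1]$ at $p_2=\min\{1,\max\{V_2,0\}\}$ with $V_2=2-\frac{\sqrt{m(1-M)}}{1-M}$. (iii) If $m=M$, $L_1$ and $L_2$ are constantly equal to $e^{\varepsilon}-(e^{\varepsilon}-1)m$.
   Context: Cube roots $\sqrt[3]{\cdot}$ of real numbers denote the real cube root. *)

theory Defs
  imports Complex_Main
begin

definition L1 :: "real \<Rightarrow> real \<Rightarrow> real \<Rightarrow> real \<Rightarrow> real" where
  "L1 eps m M p =
     (exp eps - (exp eps - 1) * (p * M + (1 - p) * m)) *
     exp (p * (M / m) + (1 - p) * ((1 - m) / (1 - (p * M + (1 - p) * m))) - 1)"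

definition L2 :: "real \<Rightarrow> real \<Rightarrow> real \<Rightarrow> real \<Rightarrow> real" where
  "L2 eps m M p =
     (let q = ((M + m) - p * M) / (2 - p) in
     (exp eps - (exp eps - 1) * (p * M + (1 - p) * q)) *
     exp (p * (M / m) + (1 - p) * ((1 - q) / (1 - M)) - 1))"

definition l1 :: "real \<Rightarrow> real \<Rightarrow> real \<Rightarrow> real \<Rightarrow> real" where
  "l1 eps m M p = ln (L1 eps m M p)"

definition l2 :: "real \<Rightarrow> real \<Rightarrow> real \<Rightarrow> real \<Rightarrow> real" where
  "l2 eps m M p = ln (L2 eps m M p)"

definition attains_max_at :: "(real \<Rightarrow> real) \<Rightarrow> real set \<Rightarrow> real \<Rightarrow> bool" where
  "attains_max_at f S p \<longleftrightarrow> p \<in> S \<and> (\<forall>q\<in>S. f q \<le> f p)"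

definition a1 :: "real \<Rightarrow> real \<Rightarrow> real \<Rightarrow> real" where
  "a1 eps m M = (exp eps - 1) * (M / m) * (M - m)^2"
definition b1 :: "real \<Rightarrow> real \<Rightarrow> real \<Rightarrow> real" where
  "b1 eps m M = - ((M - m) / m) * ((m^2 - 4*M*m + 2*M) * (exp eps - 1) + exp eps * M)"
definition c1 :: "real \<Rightarrow> real \<Rightarrow> real \<Rightarrow> real" where
  "c1 eps m M = ((1 - m) / m) * ((exp eps - 1) * (2*m^2 - 4*M*m - m) + (3 * exp eps - 1) * M)"
definition d1 :: "real \<Rightarrow> real \<Rightarrow> real \<Rightarrow> real" where
  "d1 eps m M = - (1 - m) * ((exp eps - 1) * (m - 2) + exp eps / m)"
definition D10 :: "real \<Rightarrow> real \<Rightarrow> real \<Rightarrow> real" where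
  "D10 eps m M = (b1 eps m M)^2 - 3 * a1 eps m M * c1 eps m M"
definition D11 :: "real \<Rightarrow> real \<Rightarrow> real \<Rightarrow> real" where
  "D11 eps m M = 2 * (b1 eps m M)^3 - 9 * a1 eps m M * b1 eps m M * c1 eps m M
                 + 27 * (a1 eps m M)^2 * d1 eps m M"
definition R1 :: "real \<Rightarrow> real \<Rightarrow> real \<Rightarrow> real" where
  "R1 eps m M = sqrt ((D10 eps m M)^3)"

(* root 3 is the real cube root (odd root, sign-preserving) *)
definition V1 :: "real \<Rightarrow> real \<Rightarrow> real \<Rightarrow> real" where
  "V1 eps m M =
    (let a = a1 eps m M; b = b1 eps m M; D0 = D10 eps m M; D1 = D11 eps m M;
         \<Delta> = D1^2 - 4 * D0^3 in
     if \<Delta> > 0 then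
       - (1 / (3 * a)) * (b + root 3 ((D1 + sqrt \<Delta>) / 2) + root 3 ((D1 - sqrt \<Delta>) / 2))
     else
       - (1 / (3 * a)) * (b + 2 * sqrt D0 * cos ((1/3) * arccos (D1 / (2 * R1 eps m M)))))"

definition a2 :: "real \<Rightarrow> real \<Rightarrow> real \<Rightarrow> real" where
  "a2 eps m M = (exp eps - (exp eps - 1) * m) / m"
definition b2 :: "real \<Rightarrow> real \<Rightarrow> real \<Rightarrow> real" where
  "b2 eps m M = - (6 * exp eps - (exp eps - 1) * (M + 5*m)) / m"
definition c2 :: "real \<Rightarrow> real \<Rightarrow> real \<Rightarrow> real" where
  "c2 eps m M = (1 / ((1 - M) * m)) *
     (m * ((exp eps - 1) * (m + 9*M - 9) - exp eps)
      + 4 * M * ((exp eps - 1) * M - 4 * exp eps + 1) + 12 * exp eps)"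
definition d2 :: "real \<Rightarrow> real \<Rightarrow> real \<Rightarrow> real" where
  "d2 eps m M = - (2 * exp eps - (exp eps - 1) * (M + m)) * ((4 - 4*M - m) / ((1 - M) * m))
                + 2 * (exp eps - 1)"
definition D20 :: "real \<Rightarrow> real \<Rightarrow> real \<Rightarrow> real" where
  "D20 eps m M = (b2 eps m M)^2 - 3 * a2 eps m M * c2 eps m M"
definition D21 :: "real \<Rightarrow> real \<Rightarrow> real \<Rightarrow> real" where
  "D21 eps m M = 2 * (b2 eps m M)^3 - 9 * a2 eps m M * b2 eps m M * c2 eps m M
                 + 27 * (a2 eps m M)^2 * d2 eps m M"
definition R2 :: "real \<Rightarrow> real \<Rightarrow> real \<Rightarrow> real" where
  "R2 eps m M = sqrt ((D20 eps m M)^3)"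
definition V2 :: "real \<Rightarrow> real \<Rightarrow> real \<Rightarrow> real" where
  "V2 eps m M = - (1 / (3 * a2 eps m M)) *
     (b2 eps m M + 2 * sqrt (D20 eps m M) *
        cos ((1/3) * arccos (D21 eps m M / (2 * R2 eps m M))))"

definition V1_0 :: "real \<Rightarrow> real \<Rightarrow> real" where
  "V1_0 m M = (1 - m) / (M - m) - sqrt (M * m * (1 - m) * (1 - M)) / (M * (M - m))"
definition V2_0 :: "real \<Rightarrow> real \<Rightarrow> real" where
  "V2_0 m M = 2 - sqrt (m * (1 - M)) / (1 - M)"

definition clamp01 :: "real \<Rightarrow> real" where
  "clamp01 v = min 1 (max v 0)"

end

theory Submission
  imports Defs
begin

text \<open>On the half-line to the left of its pole, each of \<open>l1\<close> and \<open>l2\<close> extends smoothly with an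
  antitone derivative, so its maximum over \<open>[0, 1]\<close>, and that of \<open>L1 = exp l1\<close> or \<open>L2 = exp l2\<close>,
  is attained at the clamp to \<open>[0, 1]\<close> of any stationary point. Clearing denominators turns the
  stationary equation into a cubic \<open>a p\<^sup>3 + b p\<^sup>2 + c p + d = 0\<close> with \<open>a > 0\<close>. The cubic is positive
  at the pole, so its least real root lies to the left of the pole, and this root is given by
  Cardano's formula, or by the trigonometric formula when the discriminant is not positive. For
  \<open>L2\<close> the cubic also changes sign between the pole and \<open>2\<close>, which forces three real roots, so only
  the trigonometric formula occurs. For \<open>eps = 0\<close> the stationary equation is quadratic and is
  solved directly, and for \<open>m = M\<close> both functions are constant.\<close>

section \<open>The least real root of a cubic\<close>

definition cubic :: "real \<Rightarrow> real \<Rightarrow> real \<Rightarrow> real \<Rightarrow> real \<Rightarrow> real" where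
  "cubic a b c d x = a * x^3 + b * x^2 + c * x + d"

definition depressed_cubic :: "real \<Rightarrow> real \<Rightarrow> real \<Rightarrow> real" where
  "depressed_cubic D0 D1 y = y^3 - 3 * D0 * y + D1"

lemma cubic_eq_depressed_cubic:
  "27 * a^2 * cubic a b c d x =
     depressed_cubic (b^2 - 3*a*c) (2*b^3 - 9*a*b*c + 27*a^2*d) (3*a*x + b)"
  unfolding cubic_def depressed_cubic_def by algebra

lemma cos_third_arccos:
  assumes "-1 \<le> w" "w \<le> 1"
  defines "t \<equiv> (1/3) * arccos w"
  shows "4 * cos t ^ 3 - 3 * cos t = w" and "1/2 \<le> cos t"
proof -
  have "cos (3 * t) = w"
    using assms by (simp add: t_def)
  then show "4 * cos t ^ 3 - 3 * cos t = w"
    by (simp add: cos_treble_cos)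
  have "0 \<le> t" "t \<le> pi/3"
    using arccos_lbound[OF assms(1,2)] arccos_ubound[OF assms(1,2)] by (auto simp: t_def)
  then have "cos (pi/3) \<le> cos t"
    by (intro cos_monotone_0_pi_le) auto
  then show "1/2 \<le> cos t"
    by (simp add: cos_60)
qed

text \<open>The trigonometric root \<open>y\<^sub>0\<close> satisfies \<open>y\<^sub>0 \<le> 0\<close> and \<open>y\<^sub>0\<^sup>2 \<ge> D0\<close>, which makes
  the quadratic cofactor of \<open>y - y\<^sub>0\<close> positive to the left of \<open>y\<^sub>0\<close>.\<close>

lemma depressed_cubic_trig_root:
  assumes "D1^2 \<le> 4 * D0^3"
  defines "y0 \<equiv> - (2 * sqrt D0 * cos ((1/3) * arccos (D1 / (2 * sqrt (D0^3)))))"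
  shows "depressed_cubic D0 D1 y0 = 0" and "y < y0 \<Longrightarrow> depressed_cubic D0 D1 y < 0"
proof -
  have "0 \<le> D0^3"
    using assms(1) zero_le_power2[of D1] by linarith
  then have "D0 \<ge> 0"
    by simp
  define s where "s = sqrt D0"
  have "s \<ge> 0" and D0_eq: "D0 = s^2" and "sqrt (D0^3) = s^3"
    using \<open>D0 \<ge> 0\<close> by (auto simp: s_def real_sqrt_power)
  define t where "t = (1/3) * arccos (D1 / (2 * s^3))"
  have y0_eq: "y0 = - 2 * s * cos t"
    using \<open>sqrt (D0^3) = s^3\<close> by (simp add: y0_def s_def t_def)
  have root_and_bounds: "depressed_cubic D0 D1 y0 = 0 \<and> D0 \<le> y0^2 \<and> y0 \<le> 0"
  proof (cases "s = 0")
    case True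
    then show ?thesis
      using assms(1) D0_eq y0_eq by (simp add: depressed_cubic_def)
  next
    case False
    then have "s > 0" using \<open>s \<ge> 0\<close> by simp
    define w where "w = D1 / (2 * s^3)"
    have "D1^2 \<le> (2 * s^3)^2"
      using assms(1) D0_eq by (simp add: power_mult_distrib power_mult[symmetric])
    then have "\<bar>D1\<bar> \<le> 2 * s^3"
      using \<open>s > 0\<close> power2_le_iff_abs_le[of "2 * s^3" D1] by simp
    then have "-1 \<le> w" "w \<le> 1"
      using \<open>s > 0\<close> by (auto simp: w_def abs_le_iff field_simps)
    from cos_third_arccos[OF this]
    have cos3: "4 * cos t ^ 3 - 3 * cos t = w" and "1/2 \<le> cos t"
      by (simp_all only: t_def w_def)
    have "D1 = 2 * s^3 * w"
      using \<open>s > 0\<close> by (simp add: w_def)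
    then have "depressed_cubic D0 D1 y0 = 0"
      unfolding depressed_cubic_def y0_eq D0_eq cos3[symmetric]
      by (simp add: algebra_simps power3_eq_cube power2_eq_square)
    moreover have "1 \<le> (2 * cos t)^2"
      using \<open>1/2 \<le> cos t\<close> by (intro one_le_power) simp
    then have "s^2 * 1 \<le> s^2 * (2 * cos t)^2"
      by (rule mult_left_mono) simp
    then have "D0 \<le> y0^2"
      unfolding y0_eq D0_eq by (simp add: power_mult_distrib)
    moreover have "y0 \<le> 0"
      using \<open>s > 0\<close> \<open>1/2 \<le> cos t\<close> y0_eq by simp
    ultimately show ?thesis by simp
  qed
  then show "depressed_cubic D0 D1 y0 = 0" by simp
  assume "y < y0"
  have factor: "depressed_cubic D0 D1 y = (y - y0) * (3 * (y0^2 - D0) + (y - y0) * (y + 2 * y0))"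
    using root_and_bounds by (simp add: depressed_cubic_def algebra_simps power3_eq_cube power2_eq_square)
  have "0 < (y - y0) * (y + 2 * y0)"
    using \<open>y < y0\<close> root_and_bounds by (intro mult_neg_neg) auto
  then show "depressed_cubic D0 D1 y < 0"
    unfolding factor using \<open>y < y0\<close> root_and_bounds by (intro mult_neg_pos) auto
qed

text \<open>With \<open>u, v\<close> the cube roots below, \<open>u v = D0\<close> and \<open>u\<^sup>3 + v\<^sup>3 = D1\<close>, so the cubic factors as
  \<open>(y + u + v) ((y - (u + v)/2)\<^sup>2 + 3/4 (u - v)\<^sup>2)\<close> with \<open>u \<noteq> v\<close>.\<close>

lemma depressed_cubic_Cardano_root:
  assumes "D1^2 - 4 * D0^3 > 0"
  defines "y0 \<equiv> - (root 3 ((D1 + sqrt (D1^2 - 4 * D0^3)) / 2)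
                   + root 3 ((D1 - sqrt (D1^2 - 4 * D0^3)) / 2))"
  shows "depressed_cubic D0 D1 y0 = 0"
    and "y < y0 \<Longrightarrow> depressed_cubic D0 D1 y < 0"
    and "y0 < y \<Longrightarrow> depressed_cubic D0 D1 y > 0"
proof -
  define r where "r = sqrt (D1^2 - 4 * D0^3)"
  have "r > 0" and r2: "r^2 = D1^2 - 4 * D0^3"
    using assms(1) by (auto simp: r_def)
  define u where "u = root 3 ((D1 + r) / 2)"
  define v where "v = root 3 ((D1 - r) / 2)"
  have u3: "u^3 = (D1 + r) / 2" and v3: "v^3 = (D1 - r) / 2"
    by (simp_all add: u_def v_def odd_real_root_pow)
  have "u * v = root 3 (((D1 + r) / 2) * ((D1 - r) / 2))"
    by (simp only: u_def v_def real_root_mult)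
  also have "((D1 + r) / 2) * ((D1 - r) / 2) = D0^3"
    using r2 by (simp add: field_simps power2_eq_square)
  finally have uv: "u * v = D0"
    by (simp add: odd_real_root_power_cancel)
  have "u \<noteq> v"
    using u3 v3 \<open>r > 0\<close> by auto
  then have "(u - v)^2 > 0" by simp
  have factor: "depressed_cubic D0 D1 y = (y - y0) * ((y + y0/2)^2 + 3/4 * (u - v)^2)" for y
  proof -
    have y0_eq: "y0 = - (u + v)" and D1_eq: "D1 = u^3 + v^3"
      using u3 v3 by (simp_all add: y0_def u_def v_def r_def)
    show ?thesis
      unfolding depressed_cubic_def uv[symmetric] y0_eq D1_eq by algebra
  qed
  have "(y + y0/2)^2 + 3/4 * (u - v)^2 > 0" for y
    using \<open>(u - v)^2 > 0\<close> by (intro add_nonneg_pos) auto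
  then show "depressed_cubic D0 D1 y0 = 0"
    and "y < y0 \<Longrightarrow> depressed_cubic D0 D1 y < 0"
    and "y0 < y \<Longrightarrow> depressed_cubic D0 D1 y > 0"
    unfolding factor by (auto simp: mult_neg_pos)
qed

definition depressed_cubic_root :: "real \<Rightarrow> real \<Rightarrow> real" where
  "depressed_cubic_root D0 D1 =
     (if D1^2 - 4 * D0^3 > 0
      then - (root 3 ((D1 + sqrt (D1^2 - 4 * D0^3)) / 2)
              + root 3 ((D1 - sqrt (D1^2 - 4 * D0^3)) / 2))
      else - (2 * sqrt D0 * cos ((1/3) * arccos (D1 / (2 * sqrt (D0^3))))))"

lemma depressed_cubic_root_least:
  shows "depressed_cubic D0 D1 (depressed_cubic_root D0 D1) = 0"
    and "y < depressed_cubic_root D0 D1 \<Longrightarrow> depressed_cubic D0 D1 y < 0"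
proof -
  let ?r = "depressed_cubic_root D0 D1"
  have "depressed_cubic D0 D1 ?r = 0 \<and> (\<forall>y < ?r. depressed_cubic D0 D1 y < 0)"
  proof (cases "D1^2 - 4 * D0^3 > 0")
    case True
    then show ?thesis
      using depressed_cubic_Cardano_root[OF True]
      unfolding depressed_cubic_root_def if_P[OF True] by blast
  next
    case False
    then have "D1^2 \<le> 4 * D0^3" by simp
    then show ?thesis
      using depressed_cubic_trig_root
      unfolding depressed_cubic_root_def if_not_P[OF False] by blast
  qed
  then show "depressed_cubic D0 D1 ?r = 0" and "y < ?r \<Longrightarrow> depressed_cubic D0 D1 y < 0"
    by auto
qed

definition cubic_root :: "real \<Rightarrow> real \<Rightarrow> real \<Rightarrow> real \<Rightarrow> real" where
  "cubic_root a b c d =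
     - (1 / (3 * a)) * (b - depressed_cubic_root (b^2 - 3*a*c) (2*b^3 - 9*a*b*c + 27*a^2*d))"

lemma cubic_root_least:
  assumes "a > 0"
  shows "cubic a b c d (cubic_root a b c d) = 0"
    and "x < cubic_root a b c d \<Longrightarrow> cubic a b c d x < 0"
proof -
  have shift: "3 * a * cubic_root a b c d + b = depressed_cubic_root (b^2 - 3*a*c) (2*b^3 - 9*a*b*c + 27*a^2*d)"
    using assms by (simp add: cubic_root_def)
  show "cubic a b c d (cubic_root a b c d) = 0"
    using cubic_eq_depressed_cubic[of a b c d "cubic_root a b c d"] assms
    unfolding shift depressed_cubic_root_least(1) by simp
  assume "x < cubic_root a b c d"
  then have "3 * a * x + b < depressed_cubic_root (b^2 - 3*a*c) (2*b^3 - 9*a*b*c + 27*a^2*d)"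
    using assms unfolding shift[symmetric] by simp
  then have "27 * a^2 * cubic a b c d x < 0"
    unfolding cubic_eq_depressed_cubic by (rule depressed_cubic_root_least(2))
  then show "cubic a b c d x < 0"
    using assms by (simp add: mult_less_0_iff)
qed

lemma cubic_root_less:
  assumes "a > 0" and "cubic a b c d x > 0"
  shows "cubic_root a b c d < x"
  using cubic_root_least[OF assms(1)] assms(2) by (metis less_irrefl not_less_iff_gr_or_eq)

text \<open>A sign change from \<open>+\<close> to \<open>-\<close> is impossible for a cubic with positive leading coefficient
  and a single real root, so such a cubic has three real roots.\<close>

lemma cubic_discriminant_nonpos:
  assumes "a > 0" "x < y" "cubic a b c d x > 0" "cubic a b c d y < 0"
  shows "(2*b^3 - 9*a*b*c + 27*a^2*d)^2 - 4 * (b^2 - 3*a*c)^3 \<le> 0"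
proof (rule ccontr)
  define D0 where "D0 = b^2 - 3*a*c"
  define D1 where "D1 = 2*b^3 - 9*a*b*c + 27*a^2*d"
  assume "\<not> ?thesis"
  then have "D1^2 - 4 * D0^3 > 0"
    by (simp add: D0_def D1_def)
  note Cardano = depressed_cubic_Cardano_root[OF this]
  have depressed: "27 * a^2 * cubic a b c d z = depressed_cubic D0 D1 (3 * a * z + b)" for z
    unfolding D0_def D1_def by (rule cubic_eq_depressed_cubic)
  have "27 * a^2 * cubic a b c d x > 0"
    using assms(1,3) by simp
  then have "depressed_cubic D0 D1 (3 * a * x + b) > 0"
    unfolding depressed .
  then have "3 * a * x + b > - (root 3 ((D1 + sqrt (D1^2 - 4 * D0^3)) / 2)
                   + root 3 ((D1 - sqrt (D1^2 - 4 * D0^3)) / 2))"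
    using Cardano(1,2) by (metis less_irrefl not_less_iff_gr_or_eq)
  moreover have "3 * a * x + b < 3 * a * y + b"
    using assms(1,2) by simp
  ultimately have "depressed_cubic D0 D1 (3 * a * y + b) > 0"
    by (intro Cardano(3)) simp
  moreover have "27 * a^2 * cubic a b c d y < 0"
    using assms(1,4) by (simp add: mult_pos_neg)
  ultimately show False
    unfolding depressed by simp
qed

section \<open>Maximizing a concave function over \<open>[0, 1]\<close>\<close>

lemma attains_max_at_clamp01_if_antitone_deriv:
  fixes f f' :: "real \<Rightarrow> real"
  assumes "1 < P"
    and deriv: "\<And>x. x < P \<Longrightarrow> (f has_real_derivative f' x) (at x)"
    and antitone: "\<And>x y. x \<le> y \<Longrightarrow> y < P \<Longrightarrow> f' y \<le> f' x"
    and "V < P" and "f' V = 0"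
  shows "attains_max_at f {0..1} (clamp01 V)"
proof -
  have up: "f x \<le> f y" if "x \<le> y" "y \<le> V" for x y
    by (rule deriv_nonneg_imp_mono[where g' = f'])
      (use that deriv antitone[of _ V] \<open>V < P\<close> \<open>f' V = 0\<close> in auto)
  have down: "f y \<le> f x" if "V \<le> x" "x \<le> y" "y < P" for x y
    by (rule deriv_nonpos_imp_antimono[where g' = f'])
      (use that deriv antitone[of V] \<open>f' V = 0\<close> in auto)
  have "f p \<le> f (clamp01 V)" if "0 \<le> p" "p \<le> 1" for p
  proof -
    consider "V \<le> 0" | "1 \<le> V" | "0 < V" "V < 1" by linarith
    then show ?thesis
    proof cases
      case 1
      then show ?thesis using down[of 0 p] that \<open>1 < P\<close> by (simp add: clamp01_def)
    next
      case 2
      then show ?thesis using up[of p 1] that by (simp add: clamp01_def)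
    next
      case 3
      then show ?thesis using up[of p V] down[of V p] that \<open>1 < P\<close>
        by (cases "p \<le> V") (auto simp: clamp01_def)
    qed
  qed
  then show ?thesis
    by (auto simp: attains_max_at_def clamp01_def)
qed

lemma attains_max_at_exp_ln:
  assumes "attains_max_at f S p" and "\<And>x. x \<in> S \<Longrightarrow> F x = exp (f x)"
  shows "attains_max_at F S p" and "attains_max_at (\<lambda>x. ln (F x)) S p"
  using assms by (auto simp: attains_max_at_def)

section \<open>The maximum of \<open>L1\<close>\<close>

text \<open>\<open>l1\<close> with the logarithm of the product expanded, for \<open>E = exp eps\<close>; it is defined on the
  whole half-line \<open>p < (1 - m)/(M - m)\<close>, where the denominator \<open>1 - (p M + (1 - p) m)\<close>
  stays positive.\<close>

definition l1_expanded :: "real \<Rightarrow> real \<Rightarrow> real \<Rightarrow> real \<Rightarrow> real" where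
  "l1_expanded E m M p =
     ln (E - (E - 1) * (p * M + (1 - p) * m)) + p * (M / m)
     + (1 - p) * ((1 - m) / (1 - (p * M + (1 - p) * m))) - 1"

definition l1_expanded_deriv :: "real \<Rightarrow> real \<Rightarrow> real \<Rightarrow> real \<Rightarrow> real" where
  "l1_expanded_deriv E m M p =
     - ((E - 1) * (M - m) / (E - (E - 1) * (p * M + (1 - p) * m))) + M / m
     - (1 - m) * (1 - M) / (1 - (p * M + (1 - p) * m))^2"

lemma L1_factors_bounds:
  fixes E m M p :: real
  assumes "1 \<le> E" "m < M" "p < (1 - m) / (M - m)"
  shows "p * M + (1 - p) * m < 1" and "1 \<le> E - (E - 1) * (p * M + (1 - p) * m)"
proof -
  have "0 < M - m"
    using assms(2) by simp
  then have "p * (M - m) < 1 - m"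
    using assms(3) by (simp add: pos_less_divide_eq)
  then show "p * M + (1 - p) * m < 1"
    by (simp add: algebra_simps)
  then have "(E - 1) * (p * M + (1 - p) * m) \<le> (E - 1) * 1"
    using assms(1) by (intro mult_left_mono) auto
  then show "1 \<le> E - (E - 1) * (p * M + (1 - p) * m)"
    by simp
qed

lemma l1_expanded_has_deriv:
  assumes "1 \<le> E" "m < M" "p < (1 - m) / (M - m)"
  shows "(l1_expanded E m M has_real_derivative l1_expanded_deriv E m M p) (at p)"
proof -
  define q where "q = p * M + (1 - p) * m"
  have "1 \<le> E - (E - 1) * q" and "q < 1"
    using L1_factors_bounds[OF assms] by (simp_all add: q_def)
  then have pos: "0 < E - (E - 1) * q" and nz: "1 - q \<noteq> 0"
    by auto
  have combine: "a / B - c / (B * B) = (a * B - c) / (B * B)" if "B \<noteq> 0" for a c B :: real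
    using that by (simp add: field_simps)
  have "(m - 1) * (1 - q) - (1 - m) * (m - M) * (1 - p) = - ((1 - m) * (1 - M))"
    unfolding q_def by algebra
  then have frac_deriv: "(m - 1) / (1 - q) - (1 - m) * (m - M) * (1 - p) / ((1 - q) * (1 - q))
      = - ((1 - m) * (1 - M)) / ((1 - q) * (1 - q))"
    by (simp only: combine[OF nz])
  show ?thesis
    unfolding l1_expanded_def[abs_def]
    apply (rule derivative_eq_intros refl pos[unfolded q_def] nz[unfolded q_def])+
    apply (simp add: l1_expanded_deriv_def flip: q_def)
    by (simp add: frac_deriv power2_eq_square)
qed

lemma l1_expanded_deriv_antitone:
  fixes E m M x y :: real
  assumes "1 \<le> E" "m < M" "M < 1" "x \<le> y" "y < (1 - m) / (M - m)"
  shows "l1_expanded_deriv E m M y \<le> l1_expanded_deriv E m M x"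
proof -
  define qx where "qx = x * M + (1 - x) * m"
  define qy where "qy = y * M + (1 - y) * m"
  have "qy - qx = (y - x) * (M - m)"
    by (simp add: qx_def qy_def algebra_simps)
  then have "qx \<le> qy"
    using assms(2,4) by (metis diff_ge_0_iff_ge less_eq_real_def zero_le_mult_iff)
  have "qy < 1" and "1 \<le> E - (E - 1) * qy"
    using L1_factors_bounds[OF assms(1,2,5)] by (simp_all add: qy_def)
  have "E - (E - 1) * qy \<le> E - (E - 1) * qx"
    using \<open>qx \<le> qy\<close> assms(1) by (simp add: mult_left_mono)
  then have "(E - 1) * (M - m) / (E - (E - 1) * qx) \<le> (E - 1) * (M - m) / (E - (E - 1) * qy)"
    using \<open>1 \<le> E - (E - 1) * qy\<close> assms(1,2) by (intro divide_left_mono) auto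
  moreover have "(1 - qy)^2 \<le> (1 - qx)^2"
    using \<open>qx \<le> qy\<close> \<open>qy < 1\<close> by (intro power_mono) auto
  then have "(1 - m) * (1 - M) / (1 - qx)^2 \<le> (1 - m) * (1 - M) / (1 - qy)^2"
    using \<open>qx \<le> qy\<close> \<open>qy < 1\<close> assms(2,3) by (intro divide_left_mono) auto
  ultimately show ?thesis
    unfolding l1_expanded_deriv_def qx_def[symmetric] qy_def[symmetric] by linarith
qed

lemma L1_eq_exp_l1_expanded:
  assumes "0 \<le> eps" "m < M" "p < (1 - m) / (M - m)"
  shows "L1 eps m M p = exp (l1_expanded (exp eps) m M p)"
proof -
  have "0 < exp eps - (exp eps - 1) * (p * M + (1 - p) * m)"
    using L1_factors_bounds[of "exp eps"] assms by fastforce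
  then show ?thesis
    unfolding L1_def l1_expanded_def by (simp add: exp_add exp_diff)
qed

lemma l1_cubic_numerator:
  fixes eps m M p :: real
  assumes "m \<noteq> 0"
  defines "E \<equiv> exp eps" and "q \<equiv> p * M + (1 - p) * m"
  shows "(M - m) * cubic (a1 eps m M) (b1 eps m M) (c1 eps m M) (d1 eps m M) p
    = (E - 1) * (M - m) * (1 - q)^2 - M / m * (E - (E - 1) * q) * (1 - q)^2
      + (1 - m) * (1 - M) * (E - (E - 1) * q)"
proof -
  have "m * ((M - m) * cubic (a1 eps m M) (b1 eps m M) (c1 eps m M) (d1 eps m M) p)
    = m * ((E - 1) * (M - m) * (1 - q)^2 + (1 - m) * (1 - M) * (E - (E - 1) * q))
      - M * (E - (E - 1) * q) * (1 - q)^2"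
    unfolding cubic_def a1_def b1_def c1_def d1_def E_def q_def using assms(1)
    by (simp add: field_simps) algebra
  then show ?thesis
    using assms(1) by (simp add: field_simps)
qed

lemma l1_expanded_deriv_eq_cubic:
  fixes eps m M p :: real
  assumes "m \<noteq> 0"
  defines "E \<equiv> exp eps" and "q \<equiv> p * M + (1 - p) * m"
  assumes "E - (E - 1) * q \<noteq> 0" and "1 - q \<noteq> 0"
  shows "(E - (E - 1) * q) * (1 - q)^2 * l1_expanded_deriv E m M p
    = - ((M - m) * cubic (a1 eps m M) (b1 eps m M) (c1 eps m M) (d1 eps m M) p)"
proof -
  have clear: "A * B^2 * (- (K / A) + L - N / B^2) = - (K * B^2 - L * A * B^2 + N * A)"
    if "A \<noteq> 0" "B \<noteq> 0" for A B K L N :: real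
    using that by (simp add: field_simps power2_eq_square)
  show ?thesis
    unfolding l1_cubic_numerator[OF assms(1)] l1_expanded_deriv_def E_def[symmetric] q_def[symmetric]
    by (rule clear[OF assms(4,5)])
qed

lemma L1_attains_max_at_critical_point:
  assumes "0 \<le> eps" "m < M" "M < 1"
    and "V < (1 - m) / (M - m)" and "l1_expanded_deriv (exp eps) m M V = 0"
  shows "attains_max_at (L1 eps m M) {0..1} (clamp01 V)"
    and "attains_max_at (l1 eps m M) {0..1} (clamp01 V)"
proof -
  have "1 < (1 - m) / (M - m)"
    using assms(2,3) by (simp add: field_simps)
  have "1 \<le> exp eps"
    using assms(1) by simp
  have max: "attains_max_at (l1_expanded (exp eps) m M) {0..1} (clamp01 V)"
    using \<open>1 < (1 - m) / (M - m)\<close> l1_expanded_has_deriv[OF \<open>1 \<le> exp eps\<close> assms(2)]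
      l1_expanded_deriv_antitone[OF \<open>1 \<le> exp eps\<close> assms(2,3)] assms(4,5)
    by (rule attains_max_at_clamp01_if_antitone_deriv)
  have exp_eq: "L1 eps m M x = exp (l1_expanded (exp eps) m M x)" if "x \<in> {0..1}" for x
    using that \<open>1 < (1 - m) / (M - m)\<close> by (intro L1_eq_exp_l1_expanded assms(1,2)) auto
  show "attains_max_at (L1 eps m M) {0..1} (clamp01 V)"
    by (rule attains_max_at_exp_ln(1)[OF max exp_eq])
  have "l1 eps m M = (\<lambda>x. ln (L1 eps m M x))"
    by (simp add: fun_eq_iff l1_def)
  then show "attains_max_at (l1 eps m M) {0..1} (clamp01 V)"
    using attains_max_at_exp_ln(2)[OF max exp_eq] by simp
qed

lemma V1_eq_cubic_root: "V1 eps m M = cubic_root (a1 eps m M) (b1 eps m M) (c1 eps m M) (d1 eps m M)"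
  unfolding V1_def Let_def D10_def D11_def R1_def cubic_root_def depressed_cubic_root_def
  by simp

lemma l1_cubic_pos_at_pole:
  assumes "0 < m" "m < M" "M < 1"
  shows "0 < cubic (a1 eps m M) (b1 eps m M) (c1 eps m M) (d1 eps m M) ((1 - m) / (M - m))"
proof -
  let ?cubic = "cubic (a1 eps m M) (b1 eps m M) (c1 eps m M) (d1 eps m M)"
  define P where "P = (1 - m) / (M - m)"
  have "M - m \<noteq> 0"
    using assms(2) by simp
  then have "P * (M - m) = 1 - m"
    by (simp add: P_def)
  then have "P * M + (1 - P) * m = 1"
    by (simp add: algebra_simps)
  then have "(M - m) * ?cubic P = (1 - m) * (1 - M)"
    using l1_cubic_numerator[where eps = eps and m = m and M = M and p = P] assms(1) by simp
  then have "0 < (M - m) * ?cubic P"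
    using assms by simp
  then show "0 < ?cubic P"
    using assms(2) by (simp add: zero_less_mult_iff P_def)
qed

lemma L1_attains_max_at_V1:
  assumes "0 < eps" "0 < m" "m < M" "M < 1"
  shows "attains_max_at (L1 eps m M) {0..1} (clamp01 (V1 eps m M))"
    and "attains_max_at (l1 eps m M) {0..1} (clamp01 (V1 eps m M))"
proof -
  define P where "P = (1 - m) / (M - m)"
  define V where "V = V1 eps m M"
  have "0 < (M - m)^2"
    using assms(3) by (intro zero_less_power) simp
  then have "0 < a1 eps m M"
    using assms by (simp add: a1_def)
  note root = cubic_root_least[OF this, of "b1 eps m M" "c1 eps m M" "d1 eps m M",
      folded V1_eq_cubic_root V_def]
  have "V < P"
    unfolding V_def V1_eq_cubic_root P_def
    by (rule cubic_root_less[OF \<open>0 < a1 eps m M\<close> l1_cubic_pos_at_pole[OF assms(2-4)]])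
  then have "1 \<le> exp eps - (exp eps - 1) * (V * M + (1 - V) * m)" and "V * M + (1 - V) * m < 1"
    using L1_factors_bounds[of "exp eps" m M V] assms(1,3) by (simp_all add: P_def)
  then have "l1_expanded_deriv (exp eps) m M V = 0"
    using l1_expanded_deriv_eq_cubic[where eps = eps and m = m and M = M and p = V] root(1) assms(2)
    by simp
  then show "attains_max_at (L1 eps m M) {0..1} (clamp01 (V1 eps m M))"
    and "attains_max_at (l1 eps m M) {0..1} (clamp01 (V1 eps m M))"
    using L1_attains_max_at_critical_point[of eps m M V] \<open>V < P\<close> assms
    by (simp_all add: V_def P_def)
qed

lemma L1_attains_max_at_V1_0:
  assumes "0 < m" "m < M" "M < 1"
  shows "attains_max_at (L1 0 m M) {0..1} (clamp01 (V1_0 m M))"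
    and "attains_max_at (l1 0 m M) {0..1} (clamp01 (V1_0 m M))"
proof -
  define S where "S = sqrt (M * m * (1 - m) * (1 - M))"
  define V where "V = V1_0 m M"
  have "0 < S" and S2: "S^2 = M * m * (1 - m) * (1 - M)"
    using assms by (simp_all add: S_def)
  have "V < (1 - m) / (M - m)"
    using \<open>0 < S\<close> assms by (simp add: V_def V1_0_def S_def[symmetric])
  have "M - m \<noteq> 0"
    using assms by simp
  have "V * (M - m) = (1 - m) / (M - m) * (M - m) - S / (M * (M - m)) * (M - m)"
    by (simp add: V_def V1_0_def S_def left_diff_distrib)
  also have "\<dots> = (1 - m) - S / M"
    using \<open>M - m \<noteq> 0\<close> by simp
  finally have "1 - (V * M + (1 - V) * m) = S / M"
    by (simp add: algebra_simps)
  moreover have "(S / M)^2 = m * (1 - m) * (1 - M) / M"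
    unfolding power_divide S2 using assms by (simp add: power2_eq_square)
  ultimately have "(1 - (V * M + (1 - V) * m))^2 = m * (1 - m) * (1 - M) / M"
    by simp
  then have "l1_expanded_deriv (exp 0) m M V = 0"
    using assms by (simp add: l1_expanded_deriv_def)
  then show "attains_max_at (L1 0 m M) {0..1} (clamp01 (V1_0 m M))"
    and "attains_max_at (l1 0 m M) {0..1} (clamp01 (V1_0 m M))"
    using L1_attains_max_at_critical_point[of 0 m M V] \<open>V < (1 - m) / (M - m)\<close> assms
    by (simp_all add: V_def)
qed

section \<open>The maximum of \<open>L2\<close>\<close>

text \<open>\<open>l2\<close> with the logarithm expanded and the inner mean \<open>q = (M + m - p M)/(2 - p)\<close>
  eliminated, for \<open>E = exp eps\<close>; with \<open>\<alpha> = E - (E - 1) M\<close> and \<open>\<beta> = E - (E - 1) m\<close> the first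
  factor of \<open>L2\<close> becomes \<open>(\<alpha> + \<beta> (1 - p))/(2 - p)\<close>, which stays positive on the half-line
  \<open>p < 1 + \<alpha>/\<beta>\<close>.\<close>

definition l2_expanded :: "real \<Rightarrow> real \<Rightarrow> real \<Rightarrow> real \<Rightarrow> real" where
  "l2_expanded E m M p =
     ln ((E - (E - 1) * M) + (E - (E - 1) * m) * (1 - p)) - ln (2 - p) + p * (M / m) + (1 - p)
     + (M - m) / (1 - M) - (M - m) / ((1 - M) * (2 - p)) - 1"

definition l2_expanded_deriv :: "real \<Rightarrow> real \<Rightarrow> real \<Rightarrow> real \<Rightarrow> real" where
  "l2_expanded_deriv E m M p =
     - ((E - (E - 1) * m) / ((E - (E - 1) * M) + (E - (E - 1) * m) * (1 - p))) + 1 / (2 - p)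
     + M / m - 1 - (M - m) / ((1 - M) * (2 - p)^2)"

lemma L2_coefficients_bounds:
  fixes E m M :: real
  assumes "1 \<le> E" "m \<le> M" "M < 1"
  shows "0 < E - (E - 1) * M" and "E - (E - 1) * M \<le> E - (E - 1) * m"
proof -
  have "(E - 1) * M \<le> (E - 1) * 1"
    using assms(1,3) by (intro mult_left_mono) auto
  then show "0 < E - (E - 1) * M"
    by simp
  show "E - (E - 1) * M \<le> E - (E - 1) * m"
    using assms(1,2) by (simp add: mult_left_mono)
qed

lemma L2_factors_bounds:
  fixes E m M p :: real
  assumes "1 \<le> E" "m \<le> M" "M < 1" "p < 1 + (E - (E - 1) * M) / (E - (E - 1) * m)"
  shows "0 < (E - (E - 1) * M) + (E - (E - 1) * m) * (1 - p)" and "0 < 2 - p"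
proof -
  note coeffs = L2_coefficients_bounds[OF assms(1-3)]
  then have "0 < E - (E - 1) * m" and "(E - (E - 1) * M) / (E - (E - 1) * m) \<le> 1"
    by simp_all
  then show "0 < 2 - p"
    using assms(4) by linarith
  have "p - 1 < (E - (E - 1) * M) / (E - (E - 1) * m)"
    using assms(4) by simp
  then have "(p - 1) * (E - (E - 1) * m) < E - (E - 1) * M"
    by (simp only: pos_less_divide_eq[OF \<open>0 < E - (E - 1) * m\<close>])
  then show "0 < (E - (E - 1) * M) + (E - (E - 1) * m) * (1 - p)"
    by (simp add: algebra_simps)
qed

lemma l2_expanded_has_deriv:
  assumes "1 \<le> E" "m \<le> M" "M < 1" "p < 1 + (E - (E - 1) * M) / (E - (E - 1) * m)"
  shows "(l2_expanded E m M has_real_derivative l2_expanded_deriv E m M p) (at p)"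
proof -
  define A where "A = (E - (E - 1) * M) + (E - (E - 1) * m) * (1 - p)"
  have pos: "0 < A" and "0 < 2 - p"
    using L2_factors_bounds[OF assms] by (simp_all add: A_def)
  then have "1 - M \<noteq> 0" and "2 - p \<noteq> 0"
    using assms(3) by auto
  then have nz: "(1 - M) * (2 - p) \<noteq> 0"
    by simp
  have "K * (- a) / (a * b * (a * b)) = - (K / (a * b^2))" if "a \<noteq> 0" "b \<noteq> 0" for K a b :: real
    using that by (simp add: field_simps power2_eq_square)
  from this[OF \<open>1 - M \<noteq> 0\<close> \<open>2 - p \<noteq> 0\<close>, of "M - m"]
  have quot: "(M - m) * (M - 1) / ((1 - M) * (2 - p) * ((1 - M) * (2 - p)))
      = - ((M - m) / ((1 - M) * (2 - p)^2))"
    by simp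
  have "((E - 1) * m - E) / A = - ((E - (E - 1) * m) / A)"
    by (simp add: minus_divide_left)
  show ?thesis
    unfolding l2_expanded_def[abs_def]
    apply (rule derivative_eq_intros refl pos[unfolded A_def] nz \<open>0 < 2 - p\<close> \<open>1 - M \<noteq> 0\<close>)+
    apply (simp add: l2_expanded_deriv_def flip: A_def)
    using quot \<open>((E - 1) * m - E) / A = - ((E - (E - 1) * m) / A)\<close> by linarith
qed

lemma l2_expanded_deriv_antitone:
  fixes E m M x y :: real
  assumes "1 \<le> E" "m \<le> M" "M < 1" "x \<le> y" "y < 1 + (E - (E - 1) * M) / (E - (E - 1) * m)"
  shows "l2_expanded_deriv E m M y \<le> l2_expanded_deriv E m M x"
proof -
  define \<alpha> where "\<alpha> = E - (E - 1) * M"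
  define \<beta> where "\<beta> = E - (E - 1) * m"
  define Ax where "Ax = \<alpha> + \<beta> * (1 - x)"
  define Ay where "Ay = \<alpha> + \<beta> * (1 - y)"
  define Bx where "Bx = 2 - x"
  define By where "By = 2 - y"
  have "x < 1 + \<alpha> / \<beta>"
    using assms(4,5) by (simp add: \<alpha>_def \<beta>_def)
  note bounds_x = L2_factors_bounds[OF assms(1-3) this[unfolded \<alpha>_def \<beta>_def],
      folded \<alpha>_def \<beta>_def Ax_def Bx_def]
  note bounds_y = L2_factors_bounds[OF assms(1-3,5), folded \<alpha>_def \<beta>_def Ay_def By_def]
  have "\<alpha> \<le> \<beta>"
    using L2_coefficients_bounds(2)[OF assms(1-3)] by (simp add: \<alpha>_def \<beta>_def)
  then have "Ax \<le> \<beta> * Bx" and "Ay \<le> \<beta> * By"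
    by (simp_all add: Ax_def Ay_def Bx_def By_def algebra_simps)
  then have "Ax * Ay \<le> (\<beta> * Bx) * (\<beta> * By)"
    using bounds_x(1) bounds_y(1) by (intro mult_mono) auto
  then have "1 / (Bx * By) \<le> \<beta>^2 / (Ax * Ay)"
    using bounds_x bounds_y by (simp add: field_simps power2_eq_square)
  have "1 / By - 1 / Bx = (Bx - By) / (Bx * By)" and "\<beta> / Ax - \<beta> / Ay = \<beta> * (Ay - Ax) / (Ax * Ay)"
    using bounds_x bounds_y by (simp_all add: field_simps)
  moreover have "Bx - By = y - x" and "Ay - Ax = \<beta> * (x - y)"
    by (simp_all add: Ax_def Ay_def Bx_def By_def algebra_simps)
  ultimately have "(1 / By - \<beta> / Ay) - (1 / Bx - \<beta> / Ax) = (y - x) * (1 / (Bx * By) - \<beta>^2 / (Ax * Ay))"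
    by (simp add: algebra_simps power2_eq_square diff_divide_distrib)
  moreover have "(y - x) * (1 / (Bx * By) - \<beta>^2 / (Ax * Ay)) \<le> 0"
    using \<open>1 / (Bx * By) \<le> \<beta>^2 / (Ax * Ay)\<close> assms(4) by (intro mult_nonneg_nonpos) auto
  moreover have "(1 - M) * By^2 \<le> (1 - M) * Bx^2"
    using assms(3,4) bounds_y(2) by (intro mult_left_mono power_mono) (auto simp: Bx_def By_def)
  then have "(M - m) / ((1 - M) * Bx^2) \<le> (M - m) / ((1 - M) * By^2)"
    using bounds_x(2) bounds_y(2) assms(2,3) by (intro divide_left_mono mult_pos_pos) auto
  ultimately show ?thesis
    unfolding l2_expanded_deriv_def \<alpha>_def[symmetric] \<beta>_def[symmetric]
      Ax_def[symmetric] Ay_def[symmetric] Bx_def[symmetric] By_def[symmetric] by linarith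
qed

lemma L2_eq_exp_l2_expanded:
  assumes "0 \<le> eps" "m \<le> M" "M < 1"
    and "p < 1 + (exp eps - (exp eps - 1) * M) / (exp eps - (exp eps - 1) * m)"
  shows "L2 eps m M p = exp (l2_expanded (exp eps) m M p)"
proof -
  define E where "E = exp eps"
  define q where "q = ((M + m) - p * M) / (2 - p)"
  have "1 \<le> E"
    using assms(1) by (simp add: E_def)
  note bounds = L2_factors_bounds[OF this assms(2,3) assms(4)[folded E_def]]
  then have "2 - p \<noteq> 0" and "1 - M \<noteq> 0"
    using assms(3) by auto
  have factor: "E - (E - 1) * (p * M + (1 - p) * q)
      = ((E - (E - 1) * M) + (E - (E - 1) * m) * (1 - p)) / (2 - p)"
    using \<open>2 - p \<noteq> 0\<close> by (simp add: q_def field_simps)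
  define K where "K = (M - m) / ((1 - M) * (2 - p))"
  have "1 - q = (1 - M) + (M - m) / (2 - p)"
    using \<open>2 - p \<noteq> 0\<close> by (simp add: q_def field_simps)
  then have "(1 - q) / (1 - M) = 1 + K"
    unfolding K_def using \<open>1 - M \<noteq> 0\<close>
    by (simp only: add_divide_distrib divide_divide_eq_left mult.commute divide_self_if if_False)
  moreover have "(M - m) / (1 - M) = (2 - p) * K"
    using \<open>2 - p \<noteq> 0\<close> by (simp add: K_def)
  ultimately have exponent: "p * (M / m) + (1 - p) * ((1 - q) / (1 - M)) - 1
      = p * (M / m) + (1 - p) + (M - m) / (1 - M) - (M - m) / ((1 - M) * (2 - p)) - 1"
    unfolding K_def[symmetric] by (simp add: algebra_simps)
  show ?thesis
    unfolding L2_def Let_def q_def[symmetric] E_def[symmetric] factor exponent l2_expanded_def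
    using bounds by (simp add: exp_add exp_diff)
qed

lemma l2_cubic_numerator:
  fixes eps m M p :: real
  assumes "m \<noteq> 0" "M \<noteq> 1"
  defines "E \<equiv> exp eps"
  defines "A \<equiv> (E - (E - 1) * M) + (E - (E - 1) * m) * (1 - p)"
  shows "m * (1 - M) * ((M - m) * cubic (a2 eps m M) (b2 eps m M) (c2 eps m M) (d2 eps m M) p)
    = m * (1 - M) * ((E - (E - 1) * m) * (2 - p)^2 - A * (2 - p)) + m * (M - m) * A
      - (1 - M) * (M - m) * A * (2 - p)^2"
proof -
  have "1 - M \<noteq> 0"
    using assms(2) by simp
  have a: "m * (1 - M) * a2 eps m M = (1 - M) * (E - (E - 1) * m)"
    using assms(1) by (simp add: a2_def E_def)
  have b: "m * (1 - M) * b2 eps m M = - (1 - M) * (6 * E - (E - 1) * (M + 5 * m))"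
    using assms(1) by (simp add: b2_def E_def) algebra
  have c: "m * (1 - M) * c2 eps m M
      = m * ((E - 1) * (m + 9 * M - 9) - E) + 4 * M * ((E - 1) * M - 4 * E + 1) + 12 * E"
    using assms(1) \<open>1 - M \<noteq> 0\<close> by (simp add: c2_def E_def)
  have d: "m * (1 - M) * d2 eps m M
      = - (2 * E - (E - 1) * (M + m)) * (4 - 4 * M - m) + 2 * (E - 1) * m * (1 - M)"
    using assms(1) \<open>1 - M \<noteq> 0\<close> by (simp add: d2_def E_def field_simps)
  have "m * (1 - M) * ((M - m) * cubic (a2 eps m M) (b2 eps m M) (c2 eps m M) (d2 eps m M) p)
    = (M - m) * ((m * (1 - M) * a2 eps m M) * p^3 + (m * (1 - M) * b2 eps m M) * p^2
        + (m * (1 - M) * c2 eps m M) * p + m * (1 - M) * d2 eps m M)"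
    by (simp add: cubic_def algebra_simps)
  then show ?thesis
    unfolding a b c d A_def by algebra
qed

lemma l2_expanded_deriv_eq_cubic:
  fixes eps m M p :: real
  assumes "m \<noteq> 0" "M \<noteq> 1"
  defines "E \<equiv> exp eps"
  defines "A \<equiv> (E - (E - 1) * M) + (E - (E - 1) * m) * (1 - p)"
  assumes "A \<noteq> 0" and "2 - p \<noteq> 0"
  shows "m * (1 - M) * A * (2 - p)^2 * l2_expanded_deriv E m M p
    = - (m * (1 - M) * ((M - m) * cubic (a2 eps m M) (b2 eps m M) (c2 eps m M) (d2 eps m M) p))"
proof -
  have "1 - M \<noteq> 0"
    using assms(2) by simp
  have clear: "m * N * A * B^2 * (- (\<beta> / A) + 1 / B + M / m - 1 - K / (N * B^2))
      = - (m * N * (\<beta> * B^2 - A * B) + m * K * A - N * (M - m) * A * B^2)"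
    if "m \<noteq> 0" "N \<noteq> 0" "A \<noteq> 0" "B \<noteq> 0" for m N A B \<beta> K M :: real
    using that by (simp add: field_simps power2_eq_square)
  show ?thesis
    unfolding l2_cubic_numerator[OF assms(1,2)] l2_expanded_deriv_def E_def[symmetric] A_def[symmetric]
    by (rule clear[OF assms(1) \<open>1 - M \<noteq> 0\<close> assms(5,6)])
qed

lemma L2_attains_max_at_critical_point:
  assumes "0 \<le> eps" "m \<le> M" "M < 1"
    and "V < 1 + (exp eps - (exp eps - 1) * M) / (exp eps - (exp eps - 1) * m)"
    and "l2_expanded_deriv (exp eps) m M V = 0"
  shows "attains_max_at (L2 eps m M) {0..1} (clamp01 V)"
    and "attains_max_at (l2 eps m M) {0..1} (clamp01 V)"
proof -
  define P where "P = 1 + (exp eps - (exp eps - 1) * M) / (exp eps - (exp eps - 1) * m)"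
  have "1 \<le> exp eps"
    using assms(1) by simp
  note coeffs = L2_coefficients_bounds[OF this assms(2,3)]
  have "1 < P"
    using coeffs by (simp add: P_def)
  have max: "attains_max_at (l2_expanded (exp eps) m M) {0..1} (clamp01 V)"
    using \<open>1 < P\<close> l2_expanded_has_deriv[OF \<open>1 \<le> exp eps\<close> assms(2,3)]
      l2_expanded_deriv_antitone[OF \<open>1 \<le> exp eps\<close> assms(2,3)] assms(4,5)
    unfolding P_def by (rule attains_max_at_clamp01_if_antitone_deriv)
  have exp_eq: "L2 eps m M x = exp (l2_expanded (exp eps) m M x)" if "x \<in> {0..1}" for x
    using that \<open>1 < P\<close> by (intro L2_eq_exp_l2_expanded assms(1-3)) (auto simp: P_def)
  show "attains_max_at (L2 eps m M) {0..1} (clamp01 V)"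
    by (rule attains_max_at_exp_ln(1)[OF max exp_eq])
  have "l2 eps m M = (\<lambda>x. ln (L2 eps m M x))"
    by (simp add: fun_eq_iff l2_def)
  then show "attains_max_at (l2 eps m M) {0..1} (clamp01 V)"
    using attains_max_at_exp_ln(2)[OF max exp_eq] by simp
qed

lemma V2_eq_cubic_root:
  assumes "(2 * b2 eps m M ^ 3 - 9 * a2 eps m M * b2 eps m M * c2 eps m M
      + 27 * a2 eps m M ^ 2 * d2 eps m M)^2
    - 4 * (b2 eps m M ^ 2 - 3 * a2 eps m M * c2 eps m M)^3 \<le> 0"
  shows "V2 eps m M = cubic_root (a2 eps m M) (b2 eps m M) (c2 eps m M) (d2 eps m M)"
  using assms unfolding V2_def D20_def D21_def R2_def cubic_root_def depressed_cubic_root_def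
  by simp

lemma l2_cubic_sign_change:
  fixes eps m M :: real
  assumes "0 < eps" "0 < m" "m < M" "M < 1"
  defines "P \<equiv> 1 + (exp eps - (exp eps - 1) * M) / (exp eps - (exp eps - 1) * m)"
  shows "P < 2" and "0 < cubic (a2 eps m M) (b2 eps m M) (c2 eps m M) (d2 eps m M) P"
    and "cubic (a2 eps m M) (b2 eps m M) (c2 eps m M) (d2 eps m M) 2 < 0"
proof -
  let ?cubic = "cubic (a2 eps m M) (b2 eps m M) (c2 eps m M) (d2 eps m M)"
  define \<alpha> where "\<alpha> = exp eps - (exp eps - 1) * M"
  define \<beta> where "\<beta> = exp eps - (exp eps - 1) * m"
  have "0 < \<alpha>"
    using L2_coefficients_bounds(1)[of "exp eps" m M] assms(1-4) by (simp add: \<alpha>_def)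
  moreover have "\<alpha> < \<beta>"
    using assms(1,3) by (simp add: \<alpha>_def \<beta>_def)
  moreover have "P = 1 + \<alpha> / \<beta>"
    by (simp add: P_def \<alpha>_def \<beta>_def)
  ultimately have "0 < \<beta>" and "0 < 2 - P" and "\<alpha> + \<beta> * (1 - P) = 0"
    by (simp_all add: algebra_simps)
  then show "P < 2"
    by simp
  have "m \<noteq> 0" "M \<noteq> 1"
    using assms by simp_all
  note numerator = l2_cubic_numerator[OF this, of eps, folded \<alpha>_def \<beta>_def]
  have "m * (1 - M) * ((M - m) * ?cubic P) = m * (1 - M) * (\<beta> * (2 - P)^2)"
    using numerator[of P] \<open>\<alpha> + \<beta> * (1 - P) = 0\<close> by simp
  then have "(M - m) * ?cubic P = \<beta> * (2 - P)^2"
    using \<open>m \<noteq> 0\<close> \<open>M \<noteq> 1\<close> by simp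
  then have "0 < (M - m) * ?cubic P"
    using \<open>0 < \<beta>\<close> \<open>0 < 2 - P\<close> by simp
  then show "0 < ?cubic P"
    using assms(3) by (simp add: zero_less_mult_iff)
  have "m * (M - m) * ((1 - M) * ?cubic 2) = m * (M - m) * (\<alpha> - \<beta>)"
    using numerator[of 2] by (simp add: algebra_simps)
  then have "(1 - M) * ?cubic 2 < 0"
    using \<open>\<alpha> < \<beta>\<close> assms(2,3) by simp
  then show "?cubic 2 < 0"
    using assms(4) by (simp add: mult_less_0_iff)
qed

lemma L2_attains_max_at_V2:
  assumes "0 < eps" "0 < m" "m < M" "M < 1"
  shows "attains_max_at (L2 eps m M) {0..1} (clamp01 (V2 eps m M))"
    and "attains_max_at (l2 eps m M) {0..1} (clamp01 (V2 eps m M))"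
proof -
  define P where "P = 1 + (exp eps - (exp eps - 1) * M) / (exp eps - (exp eps - 1) * m)"
  define V where "V = V2 eps m M"
  note sign_change = l2_cubic_sign_change[OF assms, folded P_def]
  have "1 \<le> exp eps"
    using assms(1) by simp
  then have "0 < exp eps - (exp eps - 1) * m"
    using L2_coefficients_bounds[of "exp eps" m M] assms(3,4) by simp
  then have "0 < a2 eps m M"
    using assms(2) by (simp add: a2_def)
  have V_eq: "V = cubic_root (a2 eps m M) (b2 eps m M) (c2 eps m M) (d2 eps m M)"
    unfolding V_def using sign_change
    by (intro V2_eq_cubic_root cubic_discriminant_nonpos[OF \<open>0 < a2 eps m M\<close>]) simp_all
  note root = cubic_root_least[OF \<open>0 < a2 eps m M\<close>, of "b2 eps m M" "c2 eps m M" "d2 eps m M",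
      folded V_eq]
  have "V < P"
    unfolding V_eq by (rule cubic_root_less[OF \<open>0 < a2 eps m M\<close> sign_change(2)])
  then have "0 < (exp eps - (exp eps - 1) * M) + (exp eps - (exp eps - 1) * m) * (1 - V)"
    and "0 < 2 - V"
    using L2_factors_bounds[OF \<open>1 \<le> exp eps\<close>, of m M V] assms by (simp_all add: P_def)
  then have "l2_expanded_deriv (exp eps) m M V = 0"
    using l2_expanded_deriv_eq_cubic[of m M eps V] root(1) assms(2,4) by simp
  then show "attains_max_at (L2 eps m M) {0..1} (clamp01 (V2 eps m M))"
    and "attains_max_at (l2 eps m M) {0..1} (clamp01 (V2 eps m M))"
    using L2_attains_max_at_critical_point[of eps m M V] \<open>V < P\<close> assms
    by (simp_all add: V_def P_def)
qed

lemma L2_attains_max_at_V2_0: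
  assumes "0 < m" "m \<le> M" "M < 1"
  shows "attains_max_at (L2 0 m M) {0..1} (clamp01 (V2_0 m M))"
    and "attains_max_at (l2 0 m M) {0..1} (clamp01 (V2_0 m M))"
proof -
  define T where "T = sqrt (m * (1 - M))"
  define V where "V = V2_0 m M"
  have "0 < T" and T2: "T^2 = m * (1 - M)"
    using assms by (simp_all add: T_def)
  have "2 - V = T / (1 - M)"
    by (simp add: V_def V2_0_def T_def)
  then have "0 < 2 - V"
    using \<open>0 < T\<close> assms(3) by simp
  have "(1 - M) * (2 - V)^2 = m"
    unfolding \<open>2 - V = T / (1 - M)\<close> power_divide T2 using assms(3)
    by (simp add: power2_eq_square)
  have "l2_expanded_deriv (exp 0) m M V = M / m - 1 - (M - m) / ((1 - M) * (2 - V)^2)"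
    by (simp add: l2_expanded_deriv_def)
  also have "\<dots> = 0"
    unfolding \<open>(1 - M) * (2 - V)^2 = m\<close> using assms(1) by (simp add: field_simps)
  finally have "l2_expanded_deriv (exp 0) m M V = 0" .
  then show "attains_max_at (L2 0 m M) {0..1} (clamp01 (V2_0 m M))"
    and "attains_max_at (l2 0 m M) {0..1} (clamp01 (V2_0 m M))"
    using L2_attains_max_at_critical_point[of 0 m M V] \<open>0 < 2 - V\<close> assms
    by (simp_all add: V_def)
qed

lemma L1_L2_const_on_diagonal:
  assumes "0 < m" "m < 1" "p \<le> 1"
  shows "L1 eps m m p = exp eps - (exp eps - 1) * m"
    and "L2 eps m m p = exp eps - (exp eps - 1) * m"
proof -
  have "p * m + (1 - p) * m = m"
    by (simp add: algebra_simps)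
  moreover have "((m + m) - p * m) / (2 - p) = m"
    using assms(3) by (simp add: field_simps)
  ultimately show "L1 eps m m p = exp eps - (exp eps - 1) * m"
    and "L2 eps m m p = exp eps - (exp eps - 1) * m"
    using assms(1,2) by (simp_all add: L1_def L2_def)
qed

theorem proposition6:
  fixes eps m M :: real
  assumes "eps \<ge> 0" and "0 < m" and "m < 1" and "0 < M" and "M < 1" and "m \<le> M"
  shows
    "(eps \<noteq> 0 \<and> m \<noteq> M \<longrightarrow>
        attains_max_at (L1 eps m M) {0..1} (clamp01 (V1 eps m M)) \<and>
        attains_max_at (l1 eps m M) {0..1} (clamp01 (V1 eps m M)) \<and>
        attains_max_at (L2 eps m M) {0..1} (clamp01 (V2 eps m M)) \<and>
        attains_max_at (l2 eps m M) {0..1} (clamp01 (V2 eps m M)))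
     \<and> (eps = 0 \<and> m \<noteq> M \<longrightarrow>
        attains_max_at (L1 eps m M) {0..1} (clamp01 (V1_0 m M)) \<and>
        attains_max_at (l1 eps m M) {0..1} (clamp01 (V1_0 m M)) \<and>
        attains_max_at (L2 eps m M) {0..1} (clamp01 (V2_0 m M)) \<and>
        attains_max_at (l2 eps m M) {0..1} (clamp01 (V2_0 m M)))
     \<and> (m = M \<longrightarrow>
        (\<forall>p\<in>{0..1}. L1 eps m M p = exp eps - (exp eps - 1) * m \<and>
                       L2 eps m M p = exp eps - (exp eps - 1) * m))"
proof -
  have "0 < eps" if "eps \<noteq> 0"
    using that assms(1) by simp
  moreover have "m < M" if "m \<noteq> M"
    using that assms(6) by simp
  ultimately show ?thesis
    using L1_attains_max_at_V1[of eps m M] L2_attains_max_at_V2[of eps m M]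
      L1_attains_max_at_V1_0[of m M] L2_attains_max_at_V2_0[of m M]
      L1_L2_const_on_diagonal[of m _ eps] assms(2,3,5)
    by auto
qed

end
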